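(* For every finite set $\Omega$ with $|\Omega|\ge2$ and every $\varepsilon>0$ there exist $\delta>0$ and $n_0>0$ such that for all $n>n_0$ and all $\mu,\mu',\nu,\nu'\in\mathcal P(\Omega^n)$: if $D_\square(\mu,\mu')+D_\square(\nu,\nu')<\delta$, then $D_\square(\mu\otimes\nu,\mu'\otimes\nu')<\varepsilon$, where the product measures are regarded as elements of $\mathcal P((\Omega\times\Omega)^n)$ and the cut metric on the left is taken with spin set $\Omega\times\Omega$.
   Context: $\mathcal P(\mathcal X)$ denotes the set of probability measures on a finite set $\mathcal X$; $[n]=\{1,\dots,n\}$. For $\mu,\nu\in\mathcal P(\Omega^n)$, $\mu\otimes\nu$ is the law of $(\sigma,\tau)$ with $\sigma\sim\mu,\tau\sim\nu$ independent, identified with the configuration $((\sigma_1,\tau_1),\dots,(\sigma_n,\tau_n))\in(\Omega\times\Omega)^n$. For a finite spin set $\Omega$ and $\mu,\nu\in\mathcal P(\Omega^n)$ let $\Gamma(\mu,\nu)$ be the set of couplings, i.e. probability measures $\gamma$ on $\Omega^n\times\Omega^n$ whose first and second marginals are $\mu$ and $\nu$. The cut metric is $D_\square(\mu,\nu)=\frac1n\min_{\gamma\in\Gamma(\mu,\nu)}\max_{I\subset[n],\,B\subset\Omega^n\times\Omega^n,\,\omega\in\Omega}\Big|\sum_{i\in I}\sum_{(\sigma,\tau)\in B}\gamma(\sigma,\tau)\big(\mathbf 1\{\sigma_i=\omega\}-\mathbf 1\{\tau_i=\omega\}\big)\Big|$. *)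

theory Defs
  imports Complex_Main
begin

text \<open>Configurations in Omega^n are lists of length n over the finite type 'a;
  coordinates are indexed by 0..<n (instead of 1..n).\<close>

definition configs :: "nat \<Rightarrow> 'a list set" where
  "configs n = {xs. length xs = n}"

definition is_prob :: "nat \<Rightarrow> ('a::finite list \<Rightarrow> real) \<Rightarrow> bool" where
  "is_prob n \<mu> \<longleftrightarrow> (\<forall>x. 0 \<le> \<mu> x) \<and> (\<forall>x. x \<notin> configs n \<longrightarrow> \<mu> x = 0)
      \<and> (\<Sum>x\<in>configs n. \<mu> x) = 1"

definition couplings :: "nat \<Rightarrow> ('a::finite list \<Rightarrow> real) \<Rightarrow> ('a list \<Rightarrow> real)
    \<Rightarrow> ('a list \<times> 'a list \<Rightarrow> real) set" where
  "couplings n \<mu> \<nu> = {\<gamma>. (\<forall>p. 0 \<le> \<gamma> p)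
      \<and> (\<forall>p. p \<notin> configs n \<times> configs n \<longrightarrow> \<gamma> p = 0)
      \<and> (\<forall>\<sigma>\<in>configs n. (\<Sum>\<tau>\<in>configs n. \<gamma> (\<sigma>, \<tau>)) = \<mu> \<sigma>)
      \<and> (\<forall>\<tau>\<in>configs n. (\<Sum>\<sigma>\<in>configs n. \<gamma> (\<sigma>, \<tau>)) = \<nu> \<tau>)}"

definition cut_value :: "nat \<Rightarrow> ('a::finite list \<times> 'a list \<Rightarrow> real) \<Rightarrow> real" where
  "cut_value n \<gamma> = Max {\<bar>\<Sum>i\<in>I. \<Sum>p\<in>B. \<gamma> p *
        ((if fst p ! i = \<omega> then 1 else 0) - (if snd p ! i = \<omega> then 1 else 0))\<bar>
      | I B \<omega>. I \<subseteq> {0..<n} \<and> B \<subseteq> configs n \<times> configs n}"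

text \<open>Cut metric: (1/n) times the minimum over couplings (written as Inf; the
  minimum is attained by compactness).\<close>

definition cut_dist :: "nat \<Rightarrow> ('a::finite list \<Rightarrow> real) \<Rightarrow> ('a list \<Rightarrow> real) \<Rightarrow> real" where
  "cut_dist n \<mu> \<nu> = (1 / real n) * (INF \<gamma>\<in>couplings n \<mu> \<nu>. cut_value n \<gamma>)"

definition prod_meas :: "nat \<Rightarrow> ('a list \<Rightarrow> real) \<Rightarrow> ('a list \<Rightarrow> real)
    \<Rightarrow> (('a \<times> 'a) list \<Rightarrow> real)" where
  "prod_meas n \<mu> \<nu> = (\<lambda>zs. if length zs = n then \<mu> (map fst zs) * \<nu> (map snd zs) else 0)"

end

theory Submission
  imports Defs
begin

text \<open>Couplings \<gamma>1 of (\<mu>, \<mu>') and \<gamma>2 of (\<nu>, \<nu>') combine coordinatewise into a coupling of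
  \<mu>\<otimes>\<nu> and \<mu>'\<otimes>\<nu>'. For a spin (\<omega>1, \<omega>2) the indicator difference at site i splits as
  1{\<sigma>1_i = \<omega>1} (1{\<sigma>2_i = \<omega>2} - 1{\<tau>2_i = \<omega>2}) + 1{\<tau>2_i = \<omega>2} (1{\<sigma>1_i = \<omega>1} - 1{\<tau>1_i = \<omega>1}).
  Once one factor is fixed, each part is a cut sum of the other coupling over an index set
  depending only on the fixed factor, and the expected absolute value of such a sum is at most
  twice the cut value (split the configurations by its sign). Hence
  D(\<mu>\<otimes>\<nu>, \<mu>'\<otimes>\<nu>') \<le> 2 (D(\<mu>, \<mu>') + D(\<nu>, \<nu>')) for every n and every spin set.\<close>

lemma finite_configs [simp]: "finite (configs n :: 'a::finite list set)"
  using finite_lists_length_eq[of "UNIV :: 'a set" n] by (simp add: configs_def)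

definition count_diff :: "nat set \<Rightarrow> 'a \<Rightarrow> 'a list \<times> 'a list \<Rightarrow> real" where
  "count_diff I \<omega> p =
     (\<Sum>i\<in>I. (if fst p ! i = \<omega> then 1 else 0) - (if snd p ! i = \<omega> then 1 else 0))"

lemma cut_sum_eq_count_diff:
  "(\<Sum>i\<in>I. \<Sum>p\<in>B. \<gamma> p * ((if fst p ! i = \<omega> then 1 else 0) - (if snd p ! i = \<omega> then 1 else 0)))
     = (\<Sum>p\<in>B. \<gamma> p * count_diff I \<omega> p)"
  by (simp add: count_diff_def sum_distrib_left) (rule sum.swap)

lemma cut_value_eq:
  "cut_value n \<gamma> = Max {\<bar>\<Sum>p\<in>B. \<gamma> p * count_diff I \<omega> p\<bar>
     | I B \<omega>. I \<subseteq> {0..<n} \<and> B \<subseteq> configs n \<times> configs n}"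
  by (simp add: cut_value_def cut_sum_eq_count_diff)

lemma finite_cut_sums:
  fixes \<gamma> :: "'a::finite list \<times> 'a list \<Rightarrow> real"
  shows "finite {\<bar>\<Sum>p\<in>B. \<gamma> p * count_diff I \<omega> p\<bar>
     | I B \<omega>. I \<subseteq> {0..<n} \<and> B \<subseteq> configs n \<times> configs n}"
    (is "finite ?S")
proof -
  have "?S = (\<lambda>(I, B, \<omega>). \<bar>\<Sum>p\<in>B. \<gamma> p * count_diff I \<omega> p\<bar>)
      ` (Pow {0..<n} \<times> Pow (configs n \<times> configs n) \<times> UNIV)"
    by (auto simp: image_iff) blast
  then show ?thesis by simp
qed

lemma cut_value_ge:
  fixes \<gamma> :: "'a::finite list \<times> 'a list \<Rightarrow> real"
  assumes "I \<subseteq> {0..<n}" "B \<subseteq> configs n \<times> configs n"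
  shows "\<bar>\<Sum>p\<in>B. \<gamma> p * count_diff I \<omega> p\<bar> \<le> cut_value n \<gamma>"
  unfolding cut_value_eq using Max_ge[OF finite_cut_sums] assms by blast

lemma cut_value_nonneg: "0 \<le> cut_value n (\<gamma> :: 'a::finite list \<times> 'a list \<Rightarrow> real)"
  using cut_value_ge[of "{}" n "{}" \<gamma>] by simp

lemma cut_value_le:
  fixes \<gamma> :: "'a::finite list \<times> 'a list \<Rightarrow> real"
  assumes "\<And>I B \<omega>. I \<subseteq> {0..<n} \<Longrightarrow> B \<subseteq> configs n \<times> configs n \<Longrightarrow>
    \<bar>\<Sum>p\<in>B. \<gamma> p * count_diff I \<omega> p\<bar> \<le> c"
  shows "cut_value n \<gamma> \<le> c"
  unfolding cut_value_eq using assms by (subst Max_le_iff[OF finite_cut_sums]) blast+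

lemma sum_abs_count_diff_le_cut_value:
  fixes \<gamma> :: "'a::finite list \<times> 'a list \<Rightarrow> real"
  assumes "\<And>p. 0 \<le> \<gamma> p" and "J \<subseteq> {0..<n}"
  shows "(\<Sum>q\<in>configs n \<times> configs n. \<gamma> q * \<bar>count_diff J \<omega> q\<bar>) \<le> 2 * cut_value n \<gamma>"
proof -
  let ?C = "configs n \<times> configs n :: ('a list \<times> 'a list) set"
  let ?f = "count_diff J \<omega>"
  let ?P = "?C \<inter> {q. 0 \<le> ?f q}" and ?N = "?C \<inter> - {q. 0 \<le> ?f q}"
  have "(\<Sum>q\<in>?C. \<gamma> q * \<bar>?f q\<bar>) = (\<Sum>q\<in>?C. if 0 \<le> ?f q then \<gamma> q * ?f q else - (\<gamma> q * ?f q))"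
    by (rule sum.cong) auto
  also have "\<dots> = (\<Sum>q\<in>?P. \<gamma> q * ?f q) - (\<Sum>q\<in>?N. \<gamma> q * ?f q)"
    by (simp add: sum.If_cases sum_negf)
  also have "\<dots> \<le> cut_value n \<gamma> + cut_value n \<gamma>"
    using cut_value_ge[OF assms(2), of ?P \<gamma> \<omega>] cut_value_ge[OF assms(2), of ?N \<gamma> \<omega>] by auto
  finally show ?thesis by simp
qed

lemma coupling_nonneg: "\<gamma> \<in> couplings n \<mu> \<nu> \<Longrightarrow> 0 \<le> \<gamma> p"
  unfolding couplings_def by blast

lemma sum_coupling:
  assumes "\<gamma> \<in> couplings n \<mu> \<nu>" "is_prob n \<mu>"
  shows "(\<Sum>q\<in>configs n \<times> configs n. \<gamma> q) = 1"
proof -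
  have "(\<Sum>q\<in>configs n \<times> configs n. \<gamma> q) = (\<Sum>\<sigma>\<in>configs n. \<Sum>\<tau>\<in>configs n. \<gamma> (\<sigma>, \<tau>))"
    by (simp add: sum.cartesian_product case_prod_beta)
  also have "\<dots> = (\<Sum>\<sigma>\<in>configs n. \<mu> \<sigma>)"
    using assms(1) unfolding couplings_def by (intro sum.cong) auto
  finally show ?thesis using assms(2) unfolding is_prob_def by simp
qed

lemma couplings_nonempty:
  assumes "is_prob n \<mu>" "is_prob n \<nu>"
  shows "couplings n \<mu> \<nu> \<noteq> {}"
proof -
  have "(\<lambda>p. \<mu> (fst p) * \<nu> (snd p)) \<in> couplings n \<mu> \<nu>"
    using assms unfolding couplings_def is_prob_def
    by (auto simp: sum_distrib_left[symmetric] sum_distrib_right[symmetric])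
  then show ?thesis by blast
qed

definition unzip :: "('a \<times> 'b) list \<Rightarrow> 'a list \<times> 'b list" where
  "unzip zs = (map fst zs, map snd zs)"

definition unzip_pair ::
    "('a \<times> 'b) list \<times> ('a \<times> 'b) list \<Rightarrow> ('a list \<times> 'a list) \<times> ('b list \<times> 'b list)" where
  "unzip_pair p = ((map fst (fst p), map fst (snd p)), (map snd (fst p), map snd (snd p)))"

lemma bij_betw_unzip: "bij_betw unzip (configs n) (configs n \<times> configs n)"
proof (rule bij_betw_imageI)
  show "inj_on unzip (configs n)"
    by (rule inj_onI) (metis unzip_def prod.inject zip_map_fst_snd)
  show "unzip ` configs n = configs n \<times> configs n"
  proof (intro equalityI subsetI)
    fix q assume "q \<in> configs n \<times> configs n"
    then show "q \<in> unzip ` configs n"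
      by (intro image_eqI[of _ _ "zip (fst q) (snd q)"]) (auto simp: unzip_def configs_def)
  qed (auto simp: unzip_def configs_def)
qed

lemma bij_betw_unzip_pair:
  "bij_betw unzip_pair (configs n \<times> configs n)
     ((configs n \<times> configs n) \<times> (configs n \<times> configs n))"
proof (rule bij_betw_imageI)
  show "inj_on unzip_pair (configs n \<times> configs n)"
    by (rule inj_onI) (metis unzip_pair_def prod.inject zip_map_fst_snd prod.collapse)
  show "unzip_pair ` (configs n \<times> configs n) = (configs n \<times> configs n) \<times> (configs n \<times> configs n)"
    (is "?L = ?R")
  proof (intro equalityI subsetI)
    fix q assume "q \<in> ?R"
    then show "q \<in> ?L"
      by (intro image_eqI[of _ _ "(zip (fst (fst q)) (fst (snd q)), zip (snd (fst q)) (snd (snd q)))"])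
        (auto simp: unzip_pair_def configs_def)
  qed (auto simp: unzip_pair_def configs_def)
qed

lemma sum_configs_unzip:
  "(\<Sum>zs\<in>configs n. f (map fst zs) * g (map snd zs))
     = (\<Sum>a\<in>configs n. f a) * (\<Sum>b\<in>configs n. (g b :: real))"
proof -
  have "(\<Sum>zs\<in>configs n. f (map fst zs) * g (map snd zs))
      = (\<Sum>zs\<in>configs n. (\<lambda>(a, b). f a * g b) (unzip zs))"
    by (simp add: unzip_def)
  also have "\<dots> = (\<Sum>(a, b)\<in>configs n \<times> configs n. f a * g b)"
    by (rule sum.reindex_bij_betw[OF bij_betw_unzip])
  finally show ?thesis by (simp add: sum_product sum.cartesian_product)
qed

definition coupling_prod :: "nat \<Rightarrow> ('a list \<times> 'a list \<Rightarrow> real) \<Rightarrow> ('b list \<times> 'b list \<Rightarrow> real)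
    \<Rightarrow> ('a \<times> 'b) list \<times> ('a \<times> 'b) list \<Rightarrow> real" where
  "coupling_prod n \<gamma>1 \<gamma>2 p =
     (if p \<in> configs n \<times> configs n then \<gamma>1 (fst (unzip_pair p)) * \<gamma>2 (snd (unzip_pair p)) else 0)"

lemma coupling_prod_nonneg:
  assumes "\<And>q. 0 \<le> \<gamma>1 q" "\<And>q. 0 \<le> \<gamma>2 q"
  shows "0 \<le> coupling_prod n \<gamma>1 \<gamma>2 p"
  by (simp add: coupling_prod_def assms)

lemma coupling_prod_in_couplings:
  fixes \<gamma>1 \<gamma>2 :: "'a::finite list \<times> 'a list \<Rightarrow> real"
  assumes g1: "\<gamma>1 \<in> couplings n \<mu> \<mu>'" and g2: "\<gamma>2 \<in> couplings n \<nu> \<nu>'"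
  shows "coupling_prod n \<gamma>1 \<gamma>2 \<in> couplings n (prod_meas n \<mu> \<nu>) (prod_meas n \<mu>' \<nu>')"
proof -
  have left: "(\<Sum>ws\<in>configs n. coupling_prod n \<gamma>1 \<gamma>2 (zs, ws)) = prod_meas n \<mu> \<nu> zs"
    if "zs \<in> configs n" for zs :: "('a \<times> 'a) list"
  proof -
    have "(\<Sum>ws\<in>configs n. coupling_prod n \<gamma>1 \<gamma>2 (zs, ws))
        = (\<Sum>ws\<in>configs n. \<gamma>1 (map fst zs, map fst ws) * \<gamma>2 (map snd zs, map snd ws))"
      using that by (intro sum.cong) (auto simp: coupling_prod_def unzip_pair_def)
    also have "\<dots> = (\<Sum>a\<in>configs n. \<gamma>1 (map fst zs, a)) * (\<Sum>b\<in>configs n. \<gamma>2 (map snd zs, b))"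
      by (rule sum_configs_unzip)
    finally show ?thesis
      using g1 g2 that by (simp add: couplings_def prod_meas_def configs_def)
  qed
  have right: "(\<Sum>zs\<in>configs n. coupling_prod n \<gamma>1 \<gamma>2 (zs, ws)) = prod_meas n \<mu>' \<nu>' ws"
    if "ws \<in> configs n" for ws :: "('a \<times> 'a) list"
  proof -
    have "(\<Sum>zs\<in>configs n. coupling_prod n \<gamma>1 \<gamma>2 (zs, ws))
        = (\<Sum>zs\<in>configs n. \<gamma>1 (map fst zs, map fst ws) * \<gamma>2 (map snd zs, map snd ws))"
      using that by (intro sum.cong) (auto simp: coupling_prod_def unzip_pair_def)
    also have "\<dots> = (\<Sum>a\<in>configs n. \<gamma>1 (a, map fst ws)) * (\<Sum>b\<in>configs n. \<gamma>2 (b, map snd ws))"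
      by (rule sum_configs_unzip)
    finally show ?thesis
      using g1 g2 that by (simp add: couplings_def prod_meas_def configs_def)
  qed
  have nn: "0 \<le> coupling_prod n \<gamma>1 \<gamma>2 p" for p
    by (intro coupling_prod_nonneg coupling_nonneg[OF g1] coupling_nonneg[OF g2])
  show ?thesis
    unfolding couplings_def
    by (intro CollectI conjI allI impI ballI left right nn) (simp add: coupling_prod_def)
qed

lemma count_diff_unzip_pair:
  assumes "I \<subseteq> {0..<n}" "p \<in> configs n \<times> configs n" "unzip_pair p = (q1, q2)"
  shows "count_diff I (\<omega>1, \<omega>2) p =
      count_diff {i\<in>I. fst q1 ! i = \<omega>1} \<omega>2 q2 + count_diff {i\<in>I. snd q2 ! i = \<omega>2} \<omega>1 q1"
proof -
  have q: "q1 = (map fst (fst p), map fst (snd p))" "q2 = (map snd (fst p), map snd (snd p))"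
    using assms(3) by (auto simp: unzip_pair_def)
  have "finite I" using assms(1) finite_subset by blast
  moreover have "\<And>i. i \<in> I \<Longrightarrow> i < length (fst p) \<and> i < length (snd p)"
    using assms(1,2) by (auto simp: configs_def)
  ultimately show ?thesis
    unfolding count_diff_def sum.inter_filter[OF \<open>finite I\<close>] sum.distrib[symmetric] q
    by (intro sum.cong) (auto simp: prod_eq_iff)
qed

lemma sum_coupling_prod_abs_count_diff_le:
  fixes \<gamma>1 \<gamma>2 :: "'a::finite list \<times> 'a list \<Rightarrow> real"
  assumes g1: "\<gamma>1 \<in> couplings n \<mu> \<mu>'" and g2: "\<gamma>2 \<in> couplings n \<nu> \<nu>'"
    and "is_prob n \<mu>" "is_prob n \<nu>" and I: "I \<subseteq> {0..<n}"
  shows "(\<Sum>q1\<in>configs n \<times> configs n. \<Sum>q2\<in>configs n \<times> configs n. \<gamma>1 q1 * \<gamma>2 q2 *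
      \<bar>count_diff {i\<in>I. fst q1 ! i = \<omega>1} \<omega>2 q2 + count_diff {i\<in>I. snd q2 ! i = \<omega>2} \<omega>1 q1\<bar>)
    \<le> 2 * (cut_value n \<gamma>1 + cut_value n \<gamma>2)"
proof -
  let ?C = "configs n \<times> configs n :: ('a list \<times> 'a list) set"
  define J1 where "J1 q1 = {i\<in>I. fst q1 ! i = \<omega>1}" for q1 :: "'a list \<times> 'a list"
  define J2 where "J2 q2 = {i\<in>I. snd q2 ! i = \<omega>2}" for q2 :: "'a list \<times> 'a list"
  note nn1 = coupling_nonneg[OF g1] and nn2 = coupling_nonneg[OF g2]
  have "(\<Sum>q1\<in>?C. \<Sum>q2\<in>?C. \<gamma>1 q1 * \<gamma>2 q2 * \<bar>count_diff (J1 q1) \<omega>2 q2 + count_diff (J2 q2) \<omega>1 q1\<bar>)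
      \<le> (\<Sum>q1\<in>?C. \<Sum>q2\<in>?C. \<gamma>1 q1 * (\<gamma>2 q2 * \<bar>count_diff (J1 q1) \<omega>2 q2\<bar>)
          + \<gamma>2 q2 * (\<gamma>1 q1 * \<bar>count_diff (J2 q2) \<omega>1 q1\<bar>))"
  proof (intro sum_mono)
    fix q1 q2
    have "\<gamma>1 q1 * \<gamma>2 q2 * \<bar>count_diff (J1 q1) \<omega>2 q2 + count_diff (J2 q2) \<omega>1 q1\<bar>
        \<le> \<gamma>1 q1 * \<gamma>2 q2 * (\<bar>count_diff (J1 q1) \<omega>2 q2\<bar> + \<bar>count_diff (J2 q2) \<omega>1 q1\<bar>)"
      by (intro mult_left_mono abs_triangle_ineq) (simp add: nn1 nn2)
    then show "\<gamma>1 q1 * \<gamma>2 q2 * \<bar>count_diff (J1 q1) \<omega>2 q2 + count_diff (J2 q2) \<omega>1 q1\<bar>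
        \<le> \<gamma>1 q1 * (\<gamma>2 q2 * \<bar>count_diff (J1 q1) \<omega>2 q2\<bar>) + \<gamma>2 q2 * (\<gamma>1 q1 * \<bar>count_diff (J2 q2) \<omega>1 q1\<bar>)"
      by (simp add: algebra_simps)
  qed
  also have "\<dots> = (\<Sum>q1\<in>?C. \<gamma>1 q1 * (\<Sum>q2\<in>?C. \<gamma>2 q2 * \<bar>count_diff (J1 q1) \<omega>2 q2\<bar>))
      + (\<Sum>q2\<in>?C. \<gamma>2 q2 * (\<Sum>q1\<in>?C. \<gamma>1 q1 * \<bar>count_diff (J2 q2) \<omega>1 q1\<bar>))"
    by (simp add: sum.distrib sum_distrib_left sum.swap[of "\<lambda>q1 q2. \<gamma>2 q2 * _ q1 q2"])
  also have "\<dots> \<le> (\<Sum>q1\<in>?C. \<gamma>1 q1 * (2 * cut_value n \<gamma>2)) + (\<Sum>q2\<in>?C. \<gamma>2 q2 * (2 * cut_value n \<gamma>1))"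
    using I by (intro add_mono sum_mono mult_left_mono sum_abs_count_diff_le_cut_value)
      (auto simp: nn1 nn2 J1_def J2_def)
  also have "\<dots> = 2 * (cut_value n \<gamma>1 + cut_value n \<gamma>2)"
    using sum_coupling[OF g1] sum_coupling[OF g2] assms(3,4)
    by (simp add: sum_distrib_right[symmetric])
  finally show ?thesis unfolding J1_def J2_def .
qed

lemma cut_value_coupling_prod_le:
  fixes \<gamma>1 \<gamma>2 :: "'a::finite list \<times> 'a list \<Rightarrow> real"
  assumes g1: "\<gamma>1 \<in> couplings n \<mu> \<mu>'" and g2: "\<gamma>2 \<in> couplings n \<nu> \<nu>'"
    and "is_prob n \<mu>" "is_prob n \<nu>"
  shows "cut_value n (coupling_prod n \<gamma>1 \<gamma>2) \<le> 2 * (cut_value n \<gamma>1 + cut_value n \<gamma>2)"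
proof (rule cut_value_le)
  fix I and B :: "(('a \<times> 'a) list \<times> ('a \<times> 'a) list) set" and \<omega> :: "'a \<times> 'a"
  assume I: "I \<subseteq> {0..<n}" and B: "B \<subseteq> configs n \<times> configs n"
  obtain \<omega>1 \<omega>2 where \<omega>: "\<omega> = (\<omega>1, \<omega>2)" by fastforce
  let ?C = "configs n \<times> configs n :: ('a list \<times> 'a list) set"
  let ?\<Gamma> = "coupling_prod n \<gamma>1 \<gamma>2"
  define F where "F q = count_diff {i\<in>I. fst (fst q) ! i = \<omega>1} \<omega>2 (snd q)
      + count_diff {i\<in>I. snd (snd q) ! i = \<omega>2} \<omega>1 (fst q)" for q
  have nn: "0 \<le> ?\<Gamma> p" for p
    by (intro coupling_prod_nonneg coupling_nonneg[OF g1] coupling_nonneg[OF g2])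
  have "\<bar>\<Sum>p\<in>B. ?\<Gamma> p * count_diff I \<omega> p\<bar> \<le> (\<Sum>p\<in>B. ?\<Gamma> p * \<bar>count_diff I \<omega> p\<bar>)"
    by (rule order_trans[OF sum_abs]) (simp add: abs_mult nn)
  also have "\<dots> \<le> (\<Sum>p\<in>configs n \<times> configs n. ?\<Gamma> p * \<bar>count_diff I \<omega> p\<bar>)"
    using B by (intro sum_mono2) (simp_all add: nn)
  also have "\<dots> = (\<Sum>p\<in>configs n \<times> configs n.
      (\<lambda>q. \<gamma>1 (fst q) * \<gamma>2 (snd q) * \<bar>F q\<bar>) (unzip_pair p))"
    using I by (intro sum.cong refl)
      (simp add: coupling_prod_def \<omega> F_def count_diff_unzip_pair[OF I _ prod.collapse[symmetric]])
  also have "\<dots> = (\<Sum>q\<in>?C \<times> ?C. \<gamma>1 (fst q) * \<gamma>2 (snd q) * \<bar>F q\<bar>)"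
    by (rule sum.reindex_bij_betw[OF bij_betw_unzip_pair])
  also have "\<dots> \<le> 2 * (cut_value n \<gamma>1 + cut_value n \<gamma>2)"
    using sum_coupling_prod_abs_count_diff_le[OF assms I]
    by (simp add: F_def sum.cartesian_product split_def)
  finally show "\<bar>\<Sum>p\<in>B. ?\<Gamma> p * count_diff I \<omega> p\<bar> \<le> 2 * (cut_value n \<gamma>1 + cut_value n \<gamma>2)" .
qed

lemma cut_dist_prod_meas_le:
  fixes \<mu> \<mu>' \<nu> \<nu>' :: "'a::finite list \<Rightarrow> real"
  assumes "is_prob n \<mu>" "is_prob n \<mu>'" "is_prob n \<nu>" "is_prob n \<nu>'"
  shows "cut_dist n (prod_meas n \<mu> \<nu>) (prod_meas n \<mu>' \<nu>') \<le> 2 * (cut_dist n \<mu> \<mu>' + cut_dist n \<nu> \<nu>')"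
proof -
  define c where "c = (INF \<gamma>\<in>couplings n (prod_meas n \<mu> \<nu>) (prod_meas n \<mu>' \<nu>'). cut_value n \<gamma>)"
  define a where "a = (INF \<gamma>\<in>couplings n \<mu> \<mu>'. cut_value n \<gamma>)"
  define b where "b = (INF \<gamma>\<in>couplings n \<nu> \<nu>'. cut_value n \<gamma>)"
  have bdd: "bdd_below (cut_value n ` couplings n (prod_meas n \<mu> \<nu>) (prod_meas n \<mu>' \<nu>'))"
    by (rule bdd_belowI[of _ 0]) (auto simp: cut_value_nonneg)
  have "c \<le> 2 * (cut_value n \<gamma>1 + cut_value n \<gamma>2)"
    if "\<gamma>1 \<in> couplings n \<mu> \<mu>'" "\<gamma>2 \<in> couplings n \<nu> \<nu>'" for \<gamma>1 \<gamma>2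
    unfolding c_def
    using cInf_lower[OF imageI[OF coupling_prod_in_couplings[OF that]] bdd]
      cut_value_coupling_prod_le[OF that assms(1,3)]
    by (simp add: field_simps)
  then have "c / 2 - cut_value n \<gamma>2 \<le> a" if "\<gamma>2 \<in> couplings n \<nu> \<nu>'" for \<gamma>2
    unfolding a_def using that assms(1,2)
    by (intro cINF_greatest couplings_nonempty) fastforce+
  then have "c / 2 - a \<le> b"
    unfolding b_def using assms(3,4)
    by (intro cINF_greatest couplings_nonempty) fastforce+
  then have "c / real n \<le> 2 * (a / real n + b / real n)"
    by (simp add: divide_right_mono add_divide_distrib[symmetric])
  then show ?thesis by (simp add: cut_dist_def a_def b_def c_def)
qed

theorem lemma2p11:
  fixes \<epsilon> :: real
  assumes "card (UNIV :: 'a::finite set) \<ge> 2"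
    and "\<epsilon> > 0"
  shows "\<exists>\<delta>>0. \<exists>n0::nat>0. \<forall>n>n0. \<forall>\<mu> \<mu>' \<nu> \<nu>' :: 'a list \<Rightarrow> real.
           is_prob n \<mu> \<and> is_prob n \<mu>' \<and> is_prob n \<nu> \<and> is_prob n \<nu>' \<longrightarrow>
           cut_dist n \<mu> \<mu>' + cut_dist n \<nu> \<nu>' < \<delta> \<longrightarrow>
           cut_dist n (prod_meas n \<mu> \<nu>) (prod_meas n \<mu>' \<nu>') < \<epsilon>"
proof (intro exI[of _ "\<epsilon> / 2"] conjI exI[of _ "1 :: nat"] allI impI)
  fix n :: nat and \<mu> \<mu>' \<nu> \<nu>' :: "'a list \<Rightarrow> real"
  assume prob: "is_prob n \<mu> \<and> is_prob n \<mu>' \<and> is_prob n \<nu> \<and> is_prob n \<nu>'"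
    and close: "cut_dist n \<mu> \<mu>' + cut_dist n \<nu> \<nu>' < \<epsilon> / 2"
  have "cut_dist n (prod_meas n \<mu> \<nu>) (prod_meas n \<mu>' \<nu>') \<le> 2 * (cut_dist n \<mu> \<mu>' + cut_dist n \<nu> \<nu>')"
    using prob by (intro cut_dist_prod_meas_le) auto
  with close show "cut_dist n (prod_meas n \<mu> \<nu>) (prod_meas n \<mu>' \<nu>') < \<epsilon>"
    by (simp add: field_simps)
qed (use assms(2) in auto)

end
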